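(* Let $E$ be a real Banach space, $K\subset E$ nonempty closed convex, $g\in\mathcal F$ totally convex on $E$ satisfying H1–H2, $Y$ a real Banach space containing a closed, convex, pointed cone $C$ with nonempty interior, and $f:E\times E\to Y$. If $T:K\to\mathcal P(K)$ (with nonempty closed convex values) is quasi $D_g$-nonexpansive, and $f(x,\cdot)$ is $C$-convex and positively lower semicontinuous for all $x\in E$, then $DS(f,T)$ is closed and convex.
   Context: $\mathcal F$: functions $g:E\to\mathbb R$ strictly convex, lower semicontinuous, Gâteaux differentiable (derivative $g'$). $D_g(x,y)=g(x)-g(y)-\langle x-y,g'(y)\rangle$; $v_g(x,t)=\inf\{D_g(y,x):\|y-x\|=t\}$; totally convex: $v_g(x,t)>0$ for all $x$, $t>0$. H1: level sets of $D_g(x,\cdot)$ bounded for all $x$; H2: $\inf_{x\in A}v_g(x,t)>0$ for all $t>0$ and bounded $A$. $\Pi^g_D(x)$ = unique minimizer of $D_g(\cdot,x)$ over nonempty closed convex $D$. $\mathrm{Fix}(T)=\{x\in K:x\in T(x)\}$; $T$ is quasi $D_g$-nonexpansive if $S(x):=\Pi^g_{T(x)}(x)$ has $\mathrm{Fix}(S)\ne\emptyset$ and $D_g(p,S(x))\le D_g(p,x)$ for $p\in\mathrm{Fix}(S)$, $x\in K$. $C^+=\{z\in Y^*:\langle y,z\rangle\ge0\ \forall y\in C\}$; $y\preceq y'$ iff $y'-y\in C$; $C$-convex: $G(tx+(1-t)y)\preceq tG(x)+(1-t)G(y)$; positively lower semicontinuous: $x\mapsto\langle G(x),z\rangle$ lower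 semicontinuous for every $z\in C^+$. $DS(f,T)=\{x\in K:x\in T(x),\ f(y,x)\in-C\ \forall y\in K\}$. *)

theory Defs
  imports "HOL-Analysis.Analysis"
begin

definition lsc :: "('a::topological_space \<Rightarrow> real) \<Rightarrow> bool" where
  "lsc h \<longleftrightarrow> (\<forall>x. \<forall>a. a < h x \<longrightarrow> (\<forall>\<^sub>F y in at x. a < h y))"

definition strictly_convex :: "('a::real_vector \<Rightarrow> real) \<Rightarrow> bool" where
  "strictly_convex g \<longleftrightarrow>
     (\<forall>x y t. x \<noteq> y \<and> 0 < t \<and> t < 1 \<longrightarrow>
        g (t *\<^sub>R x + (1 - t) *\<^sub>R y) < t * g x + (1 - t) * g y)"

definition gateaux_deriv :: "('a::real_normed_vector \<Rightarrow> real) \<Rightarrow> ('a \<Rightarrow> ('a \<Rightarrow>\<^sub>L real)) \<Rightarrow> bool" where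
  "gateaux_deriv g g' \<longleftrightarrow>
     (\<forall>y v. ((\<lambda>t. (g (y + t *\<^sub>R v) - g y) / t) \<longlongrightarrow> blinfun_apply (g' y) v) (at 0))"

definition class_F :: "('a::real_normed_vector \<Rightarrow> real) \<Rightarrow> ('a \<Rightarrow> ('a \<Rightarrow>\<^sub>L real)) \<Rightarrow> bool" where
  "class_F g g' \<longleftrightarrow> strictly_convex g \<and> lsc g \<and> gateaux_deriv g g'"

definition bregman :: "('a::real_normed_vector \<Rightarrow> real) \<Rightarrow> ('a \<Rightarrow> ('a \<Rightarrow>\<^sub>L real)) \<Rightarrow> 'a \<Rightarrow> 'a \<Rightarrow> real" where
  "bregman g g' x y = g x - g y - blinfun_apply (g' y) (x - y)"

definition modulus_tc :: "('a::real_normed_vector \<Rightarrow> real) \<Rightarrow> ('a \<Rightarrow> ('a \<Rightarrow>\<^sub>L real)) \<Rightarrow> 'a \<Rightarrow> real \<Rightarrow> real" where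
  "modulus_tc g g' x t = Inf {bregman g g' y x | y. norm (y - x) = t}"

definition totally_convex :: "('a::real_normed_vector \<Rightarrow> real) \<Rightarrow> ('a \<Rightarrow> ('a \<Rightarrow>\<^sub>L real)) \<Rightarrow> bool" where
  "totally_convex g g' \<longleftrightarrow> (\<forall>x t. 0 < t \<longrightarrow> 0 < modulus_tc g g' x t)"

definition H1 :: "('a::real_normed_vector \<Rightarrow> real) \<Rightarrow> ('a \<Rightarrow> ('a \<Rightarrow>\<^sub>L real)) \<Rightarrow> bool" where
  "H1 g g' \<longleftrightarrow> (\<forall>x r. bounded {y. bregman g g' x y \<le> r})"

definition H2 :: "('a::real_normed_vector \<Rightarrow> real) \<Rightarrow> ('a \<Rightarrow> ('a \<Rightarrow>\<^sub>L real)) \<Rightarrow> bool" where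
  "H2 g g' \<longleftrightarrow> (\<forall>t A. 0 < t \<and> bounded A \<and> A \<noteq> {} \<longrightarrow> 0 < Inf ((\<lambda>x. modulus_tc g g' x t) ` A))"

definition bproj :: "('a::real_normed_vector \<Rightarrow> real) \<Rightarrow> ('a \<Rightarrow> ('a \<Rightarrow>\<^sub>L real)) \<Rightarrow> 'a set \<Rightarrow> 'a \<Rightarrow> 'a" where
  "bproj g g' D x = (THE y. y \<in> D \<and> (\<forall>z\<in>D. bregman g g' y x \<le> bregman g g' z x))"

definition quasi_Dg_nonexpansive :: "('a::real_normed_vector \<Rightarrow> real) \<Rightarrow> ('a \<Rightarrow> ('a \<Rightarrow>\<^sub>L real)) \<Rightarrow> 'a set \<Rightarrow> ('a \<Rightarrow> 'a set) \<Rightarrow> bool" where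
  "quasi_Dg_nonexpansive g g' K T \<longleftrightarrow>
     (let S = (\<lambda>x. bproj g g' (T x) x); FixS = {x \<in> K. x = S x} in
       FixS \<noteq> {} \<and> (\<forall>p\<in>FixS. \<forall>x\<in>K. bregman g g' p (S x) \<le> bregman g g' p x))"

definition dual_cone :: "'b::real_normed_vector set \<Rightarrow> ('b \<Rightarrow>\<^sub>L real) set" where
  "dual_cone C = {z. \<forall>y\<in>C. 0 \<le> blinfun_apply z y}"

(* C-convexity: G(tx+(1-t)y) \<preceq> tG(x)+(1-t)G(y), where a \<preceq> b iff b - a \<in> C *)
definition C_convex :: "'b::real_vector set \<Rightarrow> ('a::real_vector \<Rightarrow> 'b) \<Rightarrow> bool" where
  "C_convex C G \<longleftrightarrow> (\<forall>x y t. 0 \<le> t \<and> t \<le> 1 \<longrightarrow>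
      (t *\<^sub>R G x + (1 - t) *\<^sub>R G y) - G (t *\<^sub>R x + (1 - t) *\<^sub>R y) \<in> C)"

definition positively_lsc :: "'b::real_normed_vector set \<Rightarrow> ('a::topological_space \<Rightarrow> 'b) \<Rightarrow> bool" where
  "positively_lsc C G \<longleftrightarrow> (\<forall>z\<in>dual_cone C. lsc (\<lambda>x. blinfun_apply z (G x)))"

definition pointed :: "'b::real_vector set \<Rightarrow> bool" where
  "pointed C \<longleftrightarrow> C \<inter> uminus ` C \<subseteq> {0}"

definition DS :: "'b::real_vector set \<Rightarrow> 'a set \<Rightarrow> ('a \<Rightarrow> 'a \<Rightarrow> 'b) \<Rightarrow> ('a \<Rightarrow> 'a set) \<Rightarrow> 'a set" where
  "DS C K f T = {x \<in> K. x \<in> T x \<and> (\<forall>y\<in>K. f y x \<in> uminus ` C)}"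

end

theory Submission
  imports Defs
begin

text \<open>
Let F = {x \<in> K. x \<in> T x}; then DS(f,T) is the intersection of F with the sets
{x. -f(y,x) \<in> C}, y \<in> K.

Each set {x. -f(y,x) \<in> C} is convex by C-convexity of f(y,.). It is closed because a
closed convex cone is the intersection of the half-spaces {u. 0 \<le> z u}, z \<in> C^+
(Hahn-Banach for the sublinear functional dist(., C)), which makes the set an intersection
of sublevel sets of the lower semicontinuous functions z (f(y,.)).

For F, let S x be the Bregman projection of x onto T x, so S p = p for p \<in> F. The
three-point identity turns D(p, S x) \<le> D(p, x) into D(x, S x) \<le> (g' x - g' (S x)) (x - p),
whose right-hand side is affine in p and vanishes at p = x. Hence D(x, S x) \<le> 0 whenever
x is a limit or a convex combination of points of F, and then x = S x \<in> T x. The last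
step needs existence of Bregman projections onto closed convex sets: a minimizing sequence
stays in a sublevel set of D(., x), which is bounded by total convexity, and on bounded sets
H2 makes it Cauchy.
\<close>

section \<open>Hahn-Banach for sublinear functionals\<close>

definition sublinear :: "('a::real_vector \<Rightarrow> real) \<Rightarrow> bool" where
  "sublinear p \<longleftrightarrow> (\<forall>x y. p (x + y) \<le> p x + p y) \<and> (\<forall>c x. 0 \<le> c \<longrightarrow> p (c *\<^sub>R x) = c * p x)"

(* Partial linear functionals below p, encoded by their graphs; single-valuedness
   follows from sublinearity of p. *)
definition dominated_graph :: "('a::real_vector \<Rightarrow> real) \<Rightarrow> ('a \<times> real) set \<Rightarrow> bool" where
  "dominated_graph p G \<longleftrightarrow> subspace G \<and> (\<forall>(x, a)\<in>G. a \<le> p x)"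

lemma sublinear_add_le: "sublinear p \<Longrightarrow> p (x + y) \<le> p x + p y"
  unfolding sublinear_def by blast

lemma sublinear_scaleR: "sublinear p \<Longrightarrow> 0 \<le> c \<Longrightarrow> p (c *\<^sub>R x) = c * p x"
  unfolding sublinear_def by blast

lemma sublinear_zero: "sublinear p \<Longrightarrow> p 0 = 0"
  using sublinear_scaleR[of p 0 0] by simp

lemma dominated_graphD:
  "dominated_graph p G \<Longrightarrow> subspace G"
  "dominated_graph p G \<Longrightarrow> (x, a) \<in> G \<Longrightarrow> a \<le> p x"
  unfolding dominated_graph_def by auto

lemma dominated_graph_scaleR:
  "dominated_graph p G \<Longrightarrow> (x, a) \<in> G \<Longrightarrow> (c *\<^sub>R x, c * a) \<in> G"
  using subspace_scale[OF dominated_graphD(1), of p G "(x, a)" c] by simp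

lemma dominated_graph_single_valued:
  assumes p: "sublinear p" and G: "dominated_graph p G" and "(x, a) \<in> G" "(x, b) \<in> G"
  shows "a = b"
proof -
  have "(0, a - b) \<in> G" "(0, b - a) \<in> G"
    using subspace_diff[OF dominated_graphD(1)[OF G] assms(3,4)]
      subspace_diff[OF dominated_graphD(1)[OF G] assms(4,3)] by simp_all
  then have "a - b \<le> p 0" "b - a \<le> p 0"
    using dominated_graphD(2)[OF G] by blast+
  then show ?thesis
    using sublinear_zero[OF p] by simp
qed

lemma dominated_graph_extend:
  assumes p: "sublinear p" and G: "dominated_graph p G"
  shows "\<exists>c. dominated_graph p (span (insert (x1, c) G))"
proof -
  have G0: "(0, 0) \<in> G"
    using subspace_0[OF dominated_graphD(1)[OF G]] by (simp add: zero_prod_def)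
  have gap: "a - p (u - x1) \<le> p (v + x1) - b" if "(u, a) \<in> G" "(v, b) \<in> G" for u a v b
  proof -
    have "(u + v, a + b) \<in> G"
      using subspace_add[OF dominated_graphD(1)[OF G] that] by simp
    then have "a + b \<le> p (u + v)"
      by (rule dominated_graphD(2)[OF G])
    also have "\<dots> \<le> p (u - x1) + p (v + x1)"
      using sublinear_add_le[OF p, of "u - x1" "v + x1"] by simp
    finally show ?thesis by simp
  qed
  define c where "c = Sup {a - p (u - x1) | u a. (u, a) \<in> G}"
  have c_ge: "a - p (u - x1) \<le> c" if "(u, a) \<in> G" for u a
    unfolding c_def using that gap[OF _ G0]
    by (intro cSup_upper) (auto simp: bdd_above_def)
  have c_le: "c \<le> p (v + x1) - b" if "(v, b) \<in> G" for v b
    unfolding c_def using G0 gap[OF _ that] by (intro cSup_least) auto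
  have "b \<le> p y" if yb_span: "(y, b) \<in> span (insert (x1, c) G)" for y b
  proof -
    obtain t where "(y, b) - t *\<^sub>R (x1, c) \<in> G"
      using yb_span span_eq_iff[THEN iffD2, OF dominated_graphD(1)[OF G]]
      by (auto simp: span_insert)
    then have yb: "(y - t *\<^sub>R x1, b - t * c) \<in> G" by simp
    consider "t = 0" | "t > 0" | "t < 0" by linarith
    then show ?thesis
    proof cases
      case 1
      then show ?thesis using yb dominated_graphD(2)[OF G] by simp
    next
      case 2
      have "c \<le> p ((1 / t) *\<^sub>R (y - t *\<^sub>R x1) + x1) - (1 / t) * (b - t * c)"
        by (rule c_le[OF dominated_graph_scaleR[OF G yb]])
      also have "(1 / t) *\<^sub>R (y - t *\<^sub>R x1) + x1 = (1 / t) *\<^sub>R y"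
        using 2 by (simp add: algebra_simps)
      finally show ?thesis
        using 2 sublinear_scaleR[OF p, of "1 / t" y] by (simp add: field_simps)
    next
      case 3
      have "(- 1 / t) * (b - t * c) - p ((- 1 / t) *\<^sub>R (y - t *\<^sub>R x1) - x1) \<le> c"
        by (rule c_ge[OF dominated_graph_scaleR[OF G yb]])
      also have "(- 1 / t) *\<^sub>R (y - t *\<^sub>R x1) - x1 = (- 1 / t) *\<^sub>R y"
        using 3 by (simp add: algebra_simps)
      finally show ?thesis
        using 3 sublinear_scaleR[OF p, of "- 1 / t" y] by (simp add: field_simps)
    qed
  qed
  then show ?thesis
    unfolding dominated_graph_def by auto
qed

lemma dominated_graph_Union_chain:
  assumes "subset.chain {G. dominated_graph p G \<and> G0 \<subseteq> G} CC" "CC \<noteq> {}"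
  shows "dominated_graph p (\<Union>CC)"
proof -
  have mem: "dominated_graph p G" if "G \<in> CC" for G
    using assms(1) that by (auto simp: subset_chain_def)
  have "subspace (\<Union>CC)"
    unfolding subspace_def
  proof (intro conjI ballI allI)
    obtain G where "G \<in> CC"
      using assms(2) by blast
    then show "0 \<in> \<Union>CC"
      using subspace_0[OF dominated_graphD(1)[OF mem]] by blast
  next
    fix x y assume "x \<in> \<Union>CC" "y \<in> \<Union>CC"
    then obtain G1 G2 where G12: "G1 \<in> CC" "G2 \<in> CC" "x \<in> G1" "y \<in> G2" by blast
    have "G1 \<subseteq> G2 \<or> G2 \<subseteq> G1"
      using assms(1) G12(1,2) by (simp add: subset_chain_def)
    then show "x + y \<in> \<Union>CC"
    proof
      assume "G1 \<subseteq> G2"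
      then show ?thesis
        using subspace_add[OF dominated_graphD(1)[OF mem[OF G12(2)]]] G12 by blast
    next
      assume "G2 \<subseteq> G1"
      then show ?thesis
        using subspace_add[OF dominated_graphD(1)[OF mem[OF G12(1)]]] G12 by blast
    qed
  next
    fix c x assume "x \<in> \<Union>CC"
    then obtain G where "G \<in> CC" "x \<in> G" by blast
    then show "c *\<^sub>R x \<in> \<Union>CC"
      using subspace_scale[OF dominated_graphD(1)[OF mem]] by blast
  qed
  then show ?thesis
    using mem by (auto simp: dominated_graph_def)
qed

theorem hahn_banach_sublinear:
  assumes p: "sublinear p" and G0: "dominated_graph p G0"
  shows "\<exists>H. linear H \<and> (\<forall>x. H x \<le> p x) \<and> (\<forall>(x, a)\<in>G0. H x = a)"
proof -
  define A where "A = {G. dominated_graph p G \<and> G0 \<subseteq> G}"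
  have "\<exists>M\<in>A. \<forall>G\<in>A. M \<subseteq> G \<longrightarrow> G = M"
  proof (rule subset_Zorn_nonempty)
    show "A \<noteq> {}"
      using G0 unfolding A_def by blast
    fix CC assume ne: "CC \<noteq> {}" and chain: "subset.chain A CC"
    obtain G where "G \<in> CC"
      using ne by blast
    then have "G0 \<subseteq> \<Union>CC"
      using chain unfolding A_def by (auto simp: subset_chain_def)
    then show "\<Union>CC \<in> A"
      using dominated_graph_Union_chain[OF chain[unfolded A_def] ne] unfolding A_def by blast
  qed
  then obtain M where M: "dominated_graph p M" "G0 \<subseteq> M"
    and maximal: "\<And>G. dominated_graph p G \<Longrightarrow> M \<subseteq> G \<Longrightarrow> G = M"
    unfolding A_def by auto
  have "\<exists>a. (x, a) \<in> M" for x
  proof -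
    obtain c where c: "dominated_graph p (span (insert (x, c) M))"
      using dominated_graph_extend[OF p M(1)] by blast
    have "M \<subseteq> span (insert (x, c) M)"
      by (meson span_superset subset_insertI subset_trans)
    then have "span (insert (x, c) M) = M"
      by (rule maximal[OF c])
    then show ?thesis
      using span_superset by blast
  qed
  then obtain H where H: "\<And>x. (x, H x) \<in> M" by metis
  have H_eq: "(x, a) \<in> M \<Longrightarrow> H x = a" for x a
    using dominated_graph_single_valued[OF p M(1) H] .
  have "linear H"
  proof (rule linearI)
    show "H (x + y) = H x + H y" for x y
      using subspace_add[OF dominated_graphD(1)[OF M(1)] H H] H_eq by simp
    show "H (c *\<^sub>R x) = c *\<^sub>R H x" for c x
      using dominated_graph_scaleR[OF M(1) H] H_eq by simp
  qed
  moreover have "H x \<le> p x" for x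
    using dominated_graphD(2)[OF M(1) H] .
  moreover have "H x = a" if "(x, a) \<in> G0" for x a
    using H_eq M(2) that by blast
  ultimately show ?thesis
    by blast
qed

section \<open>Closed convex cones and their dual cones\<close>

lemma mem_uminus_image_iff: "w \<in> uminus ` A \<longleftrightarrow> - w \<in> (A :: 'a::group_add set)"
  by (metis image_eqI minus_minus imageE)

lemma convex_cone_add_mem: "convex C \<Longrightarrow> cone C \<Longrightarrow> a \<in> C \<Longrightarrow> b \<in> C \<Longrightarrow> a + b \<in> C"
  using convex_cone by blast

lemma le_infdist: "A \<noteq> {} \<Longrightarrow> (\<And>a. a \<in> A \<Longrightarrow> m \<le> dist x a) \<Longrightarrow> m \<le> infdist x A"
  by (simp add: infdist_notempty cINF_greatest)

lemma infdist_add_le_cone: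
  fixes C :: "'a::real_normed_vector set"
  assumes "convex C" "cone C" "C \<noteq> {}"
  shows "infdist (x + y) C \<le> infdist x C + infdist y C"
proof -
  have "infdist (x + y) C - infdist x C \<le> dist y b" if b: "b \<in> C" for b
  proof -
    have "infdist (x + y) C - dist y b \<le> dist x a" if a: "a \<in> C" for a
    proof -
      have "a + b \<in> C"
        using convex_cone_add_mem[OF assms(1,2) a b] .
      then have "infdist (x + y) C \<le> dist (x + y) (a + b)"
        by (rule infdist_le)
      also have "\<dots> \<le> dist x a + dist y b"
        unfolding dist_norm using norm_triangle_ineq[of "x - a" "y - b"] by (simp add: algebra_simps)
      finally show ?thesis by simp
    qed
    then show ?thesis
      using le_infdist[OF assms(3)] by fastforce
  qed
  then show ?thesis
    using le_infdist[OF assms(3)] by fastforce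
qed

lemma infdist_scaleR_le_cone:
  fixes C :: "'a::real_normed_vector set"
  assumes "cone C" "C \<noteq> {}" "0 < c"
  shows "infdist (c *\<^sub>R x) C \<le> c * infdist x C"
proof -
  have "infdist (c *\<^sub>R x) C / c \<le> dist x a" if "a \<in> C" for a
  proof -
    have "infdist (c *\<^sub>R x) C \<le> dist (c *\<^sub>R x) (c *\<^sub>R a)"
      using assms(1,3) that by (intro infdist_le) (simp add: cone_def)
    also have "\<dots> = c * dist x a"
      using assms(3) by (simp add: dist_norm flip: scaleR_diff_right)
    finally show ?thesis
      using assms(3) by (simp add: divide_simps mult.commute)
  qed
  then have "infdist (c *\<^sub>R x) C / c \<le> infdist x C"
    by (rule le_infdist[OF assms(2)])
  then show ?thesis
    using assms(3) by (simp add: divide_simps mult.commute)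
qed

lemma sublinear_infdist_cone:
  fixes C :: "'a::real_normed_vector set"
  assumes "convex C" "cone C" "C \<noteq> {}"
  shows "sublinear (\<lambda>x. infdist x C)"
  unfolding sublinear_def
proof (intro conjI allI impI)
  show "infdist (x + y) C \<le> infdist x C + infdist y C" for x y
    by (rule infdist_add_le_cone[OF assms])
  fix c :: real and x :: 'a assume "0 \<le> c"
  show "infdist (c *\<^sub>R x) C = c * infdist x C"
  proof (cases "c = 0")
    case True
    have "0 \<in> C"
      using assms(2,3) cone_contains_0 by blast
    then show ?thesis
      using True by simp
  next
    case False
    then have "0 < c" using \<open>0 \<le> c\<close> by simp
    have "c * infdist x C = c * infdist ((1 / c) *\<^sub>R (c *\<^sub>R x)) C"
      using \<open>0 < c\<close> by simp
    also have "\<dots> \<le> infdist (c *\<^sub>R x) C"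
      using infdist_scaleR_le_cone[OF assms(2,3), of "1 / c" "c *\<^sub>R x"] \<open>0 < c\<close>
      by (simp add: field_simps)
    finally show ?thesis
      using infdist_scaleR_le_cone[OF assms(2,3) \<open>0 < c\<close>, of x] by simp
  qed
qed

lemma dual_cone_separation:
  fixes C :: "'a::real_normed_vector set"
  assumes "closed C" "convex C" "cone C" "C \<noteq> {}" "u \<notin> C"
  shows "\<exists>z\<in>dual_cone C. blinfun_apply z u < 0"
proof -
  \<comment> \<open>extend t u \<mapsto> t * p u below p to H; then H \<le> p = 0 on C and H u = p u > 0\<close>
  define p where "p x = infdist x C" for x
  have p: "sublinear p"
    unfolding p_def using sublinear_infdist_cone[OF assms(2-4)] .
  have "0 \<in> C"
    using assms(3,4) cone_contains_0 by blast
  then have p_le_norm: "p x \<le> norm x" for x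
    unfolding p_def using infdist_le[of 0 C x] by simp
  have "dominated_graph p (span {(u, p u)})"
    unfolding dominated_graph_def
  proof (intro conjI subspace_span ballI)
    fix xa assume "xa \<in> span {(u, p u)}"
    then obtain t where "xa = (t *\<^sub>R u, t * p u)"
      by (auto simp: span_singleton)
    moreover have "t * p u \<le> p (t *\<^sub>R u)"
    proof (cases "0 \<le> t")
      case True
      then show ?thesis using sublinear_scaleR[OF p] by simp
    next
      case False
      then show ?thesis
        unfolding p_def
        using mult_nonpos_nonneg[of t "infdist u C"] infdist_nonneg[of u C] infdist_nonneg[of "t *\<^sub>R u" C]
        by linarith
    qed
    ultimately show "case xa of (x, a) \<Rightarrow> a \<le> p x" by simp
  qed
  then obtain H where H: "linear H" "\<And>x. H x \<le> p x" "H u = p u"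
    using hahn_banach_sublinear[OF p] span_base[of "(u, p u)" "{(u, p u)}"] by fastforce
  have "norm (- H x) \<le> norm x * 1" for x
    using H(2)[of x] H(2)[of "- x"] p_le_norm[of x] p_le_norm[of "- x"] linear_neg[OF H(1), of x]
    by simp
  then have "bounded_linear (\<lambda>x. - H x)"
    using H(1) by (intro bounded_linear_intro[where K = 1]) (auto simp: linear_add linear_scale)
  then have z: "blinfun_apply (Blinfun (\<lambda>x. - H x)) = (\<lambda>x. - H x)"
    by (rule bounded_linear_Blinfun_apply)
  have "Blinfun (\<lambda>x. - H x) \<in> dual_cone C"
    using H(2) by (simp add: dual_cone_def z p_def) (metis infdist_zero)
  moreover have "p u > 0"
    unfolding p_def using infdist_pos_not_in_closed[OF assms(1,4,5)] .
  ultimately show ?thesis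
    using H(3) z by force
qed

lemma closed_convex_cone_eq_dual:
  fixes C :: "'a::real_normed_vector set"
  assumes "closed C" "convex C" "cone C" "C \<noteq> {}"
  shows "C = {u. \<forall>z\<in>dual_cone C. 0 \<le> blinfun_apply z u}"
proof
  show "C \<subseteq> {u. \<forall>z\<in>dual_cone C. 0 \<le> blinfun_apply z u}"
    unfolding dual_cone_def by blast
  show "{u. \<forall>z\<in>dual_cone C. 0 \<le> blinfun_apply z u} \<subseteq> C"
  proof
    fix u assume "u \<in> {u. \<forall>z\<in>dual_cone C. 0 \<le> blinfun_apply z u}"
    then show "u \<in> C"
      using dual_cone_separation[OF assms, of u] by force
  qed
qed

lemma lsc_open_superlevel:
  assumes "lsc \<phi>"
  shows "open {x. c < \<phi> x}"
proof (subst open_subopen, intro ballI)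
  fix x assume x: "x \<in> {x. c < \<phi> x}"
  then have "eventually (\<lambda>y. c < \<phi> y) (at x)"
    using assms unfolding lsc_def by blast
  with x have "eventually (\<lambda>y. c < \<phi> y) (nhds x)"
    unfolding eventually_nhds_conv_at by blast
  then show "\<exists>T. open T \<and> x \<in> T \<and> T \<subseteq> {x. c < \<phi> x}"
    unfolding eventually_nhds by blast
qed

lemma lsc_closed_sublevel: "lsc \<phi> \<Longrightarrow> closed {x. \<phi> x \<le> c}"
  using lsc_open_superlevel[of \<phi> c] unfolding closed_def by (simp add: Collect_neg_eq [symmetric] not_le)

lemma lsc_le_tendsto:
  assumes "lsc \<phi>" "(X \<longlongrightarrow> x) F" "F \<noteq> bot" "((\<lambda>n. \<phi> (X n)) \<longlongrightarrow> L) F"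
  shows "\<phi> x \<le> L"
proof (rule dense_ge)
  fix c assume "L < c"
  have "eventually (\<lambda>n. \<phi> (X n) < c) F"
    using order_tendstoD(2)[OF assms(4) \<open>L < c\<close>] .
  then have "eventually (\<lambda>n. X n \<in> {x. \<phi> x \<le> c}) F"
    by (rule eventually_mono) simp
  then have "x \<in> {x. \<phi> x \<le> c}"
    using Lim_in_closed_set[OF lsc_closed_sublevel[OF assms(1)] _ assms(3,2)] by blast
  then show "\<phi> x \<le> c" by simp
qed

section \<open>Vector inequalities defined by a cone\<close>

lemma closed_neg_cone_preimage:
  fixes C :: "'b::real_normed_vector set"
  assumes "closed C" "convex C" "cone C" "C \<noteq> {}" "positively_lsc C G"
  shows "closed {x. G x \<in> uminus ` C}"
proof -
  have "{x. G x \<in> uminus ` C} = (\<Inter>z\<in>dual_cone C. {x. blinfun_apply z (G x) \<le> 0})"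
    by (subst closed_convex_cone_eq_dual[OF assms(1-4)])
      (auto simp: mem_uminus_image_iff blinfun.minus_right)
  also have "closed \<dots>"
    using assms(5) lsc_closed_sublevel unfolding positively_lsc_def by blast
  finally show ?thesis .
qed

lemma convex_neg_cone_preimage:
  fixes C :: "'b::real_vector set"
  assumes "convex C" "cone C" "C_convex C G"
  shows "convex {x. G x \<in> uminus ` C}"
proof (rule convexI)
  have add: "a + b \<in> C" if "a \<in> C" "b \<in> C" for a b
    using convex_cone_add_mem[OF assms(1,2) that] .
  have scale: "c *\<^sub>R a \<in> C" if "a \<in> C" "0 \<le> c" for a c
    using assms(2) that unfolding cone_def by blast
  fix x y and u v :: real
  assume "x \<in> {x. G x \<in> uminus ` C}" "y \<in> {x. G x \<in> uminus ` C}" "0 \<le> u" "0 \<le> v" "u + v = 1"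
  then have x: "- G x \<in> C" and y: "- G y \<in> C" and uv: "0 \<le> u" "v = 1 - u" "u \<le> 1"
    by (auto simp: mem_uminus_image_iff)
  have "(u *\<^sub>R G x + v *\<^sub>R G y - G (u *\<^sub>R x + v *\<^sub>R y)) + (u *\<^sub>R (- G x) + v *\<^sub>R (- G y)) \<in> C"
    using assms(3) uv x y unfolding C_convex_def by (intro add scale) auto
  then have "- G (u *\<^sub>R x + v *\<^sub>R y) \<in> C"
    by (simp add: algebra_simps)
  then show "u *\<^sub>R x + v *\<^sub>R y \<in> {x. G x \<in> uminus ` C}"
    by (auto simp: mem_uminus_image_iff)
qed

section \<open>Bregman distances\<close>

lemma class_FD:
  assumes "class_F g g'"
  shows "strictly_convex g" "lsc g" "gateaux_deriv g g'"
  using assms unfolding class_F_def by auto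

lemma strictly_convex_imp_convex:
  assumes "strictly_convex g" "0 \<le> t" "t \<le> 1"
  shows "g (t *\<^sub>R x + (1 - t) *\<^sub>R y) \<le> t * g x + (1 - t) * g y"
proof (cases "x = y \<or> t = 0 \<or> t = 1")
  case True
  then consider "x = y" | "t = 0" | "t = 1" by blast
  then show ?thesis
  proof cases
    case 1
    then show ?thesis
      by (simp flip: scaleR_left_distrib distrib_right)
  qed simp_all
next
  case False
  then show ?thesis
    using assms unfolding strictly_convex_def by (simp add: less_imp_le)
qed

lemma bregman_three_point:
  "bregman g g' a c = bregman g g' a b + bregman g g' b c + blinfun_apply (g' b - g' c) (a - b)"
  unfolding bregman_def by (simp add: blinfun.diff_right blinfun.diff_left algebra_simps)

lemma bregman_self [simp]: "bregman g g' x x = 0"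
  unfolding bregman_def by simp

lemma strictly_convex_bregman_left:
  assumes "strictly_convex g"
  shows "strictly_convex (\<lambda>y. bregman g g' y x)"
proof -
  have "blinfun_apply (g' x) (t *\<^sub>R a + (1 - t) *\<^sub>R b - x)
      = t * blinfun_apply (g' x) (a - x) + (1 - t) * blinfun_apply (g' x) (b - x)" for t a b
  proof -
    have "t *\<^sub>R a + (1 - t) *\<^sub>R b - x = t *\<^sub>R (a - x) + (1 - t) *\<^sub>R (b - x)"
      by (simp add: algebra_simps)
    then show ?thesis
      by (simp add: blinfun.add_right blinfun.scaleR_right)
  qed
  then show ?thesis
    using assms unfolding strictly_convex_def bregman_def by (auto simp: algebra_simps)
qed

lemma bregman_nonneg:
  assumes "class_F g g'"
  shows "0 \<le> bregman g g' y x"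
proof -
  have sc: "strictly_convex g" and gd: "gateaux_deriv g g'"
    using class_FD[OF assms] by auto
  have lim: "((\<lambda>t. (g (x + t *\<^sub>R (y - x)) - g x) / t) \<longlongrightarrow> blinfun_apply (g' x) (y - x)) (at_right 0)"
    using gd unfolding gateaux_deriv_def filterlim_at_split by blast
  have "eventually (\<lambda>t. t \<in> {0<..<1}) (at_right (0::real))"
    by (rule eventually_at_right_real) simp
  then have "eventually (\<lambda>t. (g (x + t *\<^sub>R (y - x)) - g x) / t \<le> g y - g x) (at_right 0)"
  proof eventually_elim
    case (elim t)
    have "x + t *\<^sub>R (y - x) = t *\<^sub>R y + (1 - t) *\<^sub>R x"
      by (simp add: algebra_simps)
    then have "g (x + t *\<^sub>R (y - x)) - g x \<le> t * (g y - g x)"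
      using strictly_convex_imp_convex[OF sc, of t y x] elim by (simp add: algebra_simps)
    then show ?case
      using elim by (simp add: pos_divide_le_eq mult.commute)
  qed
  then have "blinfun_apply (g' x) (y - x) \<le> g y - g x"
    using tendsto_upperbound[OF lim] by simp
  then show ?thesis
    unfolding bregman_def by simp
qed

lemma strictly_convex_midpoint:
  assumes "strictly_convex f" "x \<noteq> y"
  shows "f ((1/2) *\<^sub>R x + (1/2) *\<^sub>R y) < (f x + f y) / 2"
  using assms(1)[unfolded strictly_convex_def, rule_format, of x y "1/2"] assms(2) by simp

lemma bregman_pos:
  assumes "class_F g g'" "y \<noteq> x"
  shows "0 < bregman g g' y x"
proof -
  have "strictly_convex (\<lambda>z. bregman g g' z x)"
    by (rule strictly_convex_bregman_left[OF class_FD(1)[OF assms(1)]])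
  from strictly_convex_midpoint[OF this assms(2)] show ?thesis
    using bregman_nonneg[OF assms(1), of "(1/2) *\<^sub>R y + (1/2) *\<^sub>R x" x] by simp
qed

lemma bregman_le_0_imp_eq: "class_F g g' \<Longrightarrow> bregman g g' y x \<le> 0 \<Longrightarrow> y = x"
  using bregman_pos[of g g' y x] by fastforce

lemma bregman_midpoint:
  assumes "w = (1/2) *\<^sub>R (a + b)"
  shows "bregman g g' a x + bregman g g' b x
    = bregman g g' a w + bregman g g' b w + 2 * bregman g g' w x"
proof -
  have ab: "a + b = 2 *\<^sub>R w"
    using assms by simp
  have "blinfun_apply (g' w) (a - w) + blinfun_apply (g' w) (b - w)
      = blinfun_apply (g' w) ((a - w) + (b - w))"
    by (simp only: blinfun.add_right)
  also have "(a - w) + (b - w) = 0"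
    using ab by (simp add: scaleR_2 algebra_simps)
  finally have w: "blinfun_apply (g' w) (a - w) + blinfun_apply (g' w) (b - w) = 0"
    by simp
  have "blinfun_apply (g' x) (a - x) + blinfun_apply (g' x) (b - x)
      = blinfun_apply (g' x) ((a - x) + (b - x))"
    by (simp only: blinfun.add_right)
  also have "(a - x) + (b - x) = 2 *\<^sub>R (w - x)"
    using ab by (simp add: scaleR_2 algebra_simps)
  finally have x: "blinfun_apply (g' x) (a - x) + blinfun_apply (g' x) (b - x)
      = 2 * blinfun_apply (g' x) (w - x)"
    by (simp add: blinfun.scaleR_right)
  show ?thesis
    using w x unfolding bregman_def by (simp add: algebra_simps)
qed

section \<open>Total convexity\<close>

lemma modulus_tc_le_bregman:
  assumes "class_F g g'" "norm (y - x) = t"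
  shows "modulus_tc g g' x t \<le> bregman g g' y x"
  unfolding modulus_tc_def
proof (rule cInf_lower)
  show "bregman g g' y x \<in> {bregman g g' y x |y. norm (y - x) = t}"
    using assms(2) by blast
  show "bdd_below {bregman g g' y x |y. norm (y - x) = t}"
    unfolding bdd_below_def using bregman_nonneg[OF assms(1)] by blast
qed

(* d \<noteq> 0 rules out the trivial space, where spheres are empty and the infimum is junk *)
lemma modulus_tc_nonneg:
  fixes g :: "'a::real_normed_vector \<Rightarrow> real" and d :: 'a
  assumes "class_F g g'" "d \<noteq> 0" "0 \<le> t"
  shows "0 \<le> modulus_tc g g' x t"
proof -
  have "norm ((x + (t / norm d) *\<^sub>R d) - x) = t"
    using assms(2,3) by simp
  then have "{bregman g g' y x | y. norm (y - x) = t} \<noteq> {}"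
    by blast
  then show ?thesis
    unfolding modulus_tc_def using bregman_nonneg[OF assms(1)] by (intro cInf_greatest) auto
qed

lemma modulus_tc_mult_norm_le:
  assumes "class_F g g'" "0 < r" "r \<le> norm (y - x)"
  shows "modulus_tc g g' x r * norm (y - x) \<le> r * bregman g g' y x"
proof -
  define s where "s = norm (y - x)"
  have s: "0 < s" "r / s \<le> 1"
    using assms(2,3) by (auto simp: s_def divide_le_eq_1)
  have sc: "strictly_convex (\<lambda>y. bregman g g' y x)"
    by (rule strictly_convex_bregman_left[OF class_FD(1)[OF assms(1)]])
  have "norm (((r / s) *\<^sub>R y + (1 - r / s) *\<^sub>R x) - x) = r"
  proof -
    have "((r / s) *\<^sub>R y + (1 - r / s) *\<^sub>R x) - x = (r / s) *\<^sub>R (y - x)"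
      by (simp add: algebra_simps)
    then show ?thesis
      using s assms(2) by (simp add: s_def)
  qed
  then have "modulus_tc g g' x r \<le> bregman g g' ((r / s) *\<^sub>R y + (1 - r / s) *\<^sub>R x) x"
    by (rule modulus_tc_le_bregman[OF assms(1)])
  also have "\<dots> \<le> (r / s) * bregman g g' y x + (1 - r / s) * bregman g g' x x"
    using strictly_convex_imp_convex[OF sc, of "r / s" y x] s assms(2) by simp
  finally have "modulus_tc g g' x r \<le> (r * bregman g g' y x) / s"
    by simp
  then show ?thesis
    using s by (simp add: s_def le_divide_eq)
qed

lemma totally_convex_bounded_bregman_sublevel:
  assumes "class_F g g'" "totally_convex g g'"
  shows "bounded {y. bregman g g' y x \<le> r}"
proof -
  define v where "v = modulus_tc g g' x 1"
  have v: "0 < v"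
    using assms(2) unfolding totally_convex_def v_def by simp
  have "norm (y - x) \<le> max 1 (r / v)" if "bregman g g' y x \<le> r" for y
  proof (cases "norm (y - x) \<le> 1")
    case False
    then have "v * norm (y - x) \<le> r"
      using modulus_tc_mult_norm_le[OF assms(1), where r = 1 and x = x and y = y] that
      by (simp add: v_def)
    then have "norm (y - x) \<le> r / v"
      using v by (simp add: pos_le_divide_eq mult.commute)
    then show ?thesis
      by simp
  qed simp
  then have "{y. bregman g g' y x \<le> r} \<subseteq> cball x (max 1 (r / v))"
    by (auto simp: dist_norm norm_minus_commute)
  then show ?thesis
    using bounded_cball bounded_subset by blast
qed

lemma H2_imp_bregman_ge:
  assumes "class_F g g'" "H2 g g'" "bounded A" "0 < e"
  shows "\<exists>\<delta>>0. \<forall>w\<in>A. \<forall>y. e \<le> norm (y - w) \<longrightarrow> \<delta> \<le> bregman g g' y w"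
proof (cases "A = {}")
  case False
  define \<delta> where "\<delta> = Inf ((\<lambda>x. modulus_tc g g' x e) ` A)"
  have "0 < \<delta>"
    using assms(2-4) False unfolding H2_def \<delta>_def by blast
  moreover have "\<delta> \<le> bregman g g' y w" if "w \<in> A" "e \<le> norm (y - w)" for w y
  proof -
    have "y - w \<noteq> 0"
      using that(2) assms(4) by auto
    then have nonneg: "0 \<le> modulus_tc g g' x e" for x
      using modulus_tc_nonneg[OF assms(1) \<open>y - w \<noteq> 0\<close>, of e x] assms(4) by simp
    have "\<delta> \<le> modulus_tc g g' w e"
      unfolding \<delta>_def using that(1) nonneg by (intro cInf_lower) (auto simp: bdd_below_def)
    then have "\<delta> * e \<le> modulus_tc g g' w e * norm (y - w)"
      using \<open>0 < \<delta>\<close> that(2) nonneg[of w] assms(4)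
      by (meson less_imp_le mult_mono)
    also have "\<dots> \<le> e * bregman g g' y w"
      by (rule modulus_tc_mult_norm_le[OF assms(1,4) that(2)])
    finally show ?thesis
      using assms(4) by (simp add: mult.commute)
  qed
  ultimately show ?thesis
    by blast
qed (use zero_less_one in blast)

section \<open>Bregman projections\<close>

lemma bregman_minimizing_Cauchy:
  assumes gF: "class_F g g'" and "totally_convex g g'" "H2 g g'" "convex Q"
    and Y: "\<And>n. Y n \<in> Q" and lim: "(\<lambda>n. bregman g g' (Y n) x0) \<longlonglongrightarrow> m"
    and m_le: "\<And>z. z \<in> Q \<Longrightarrow> m \<le> bregman g g' z x0"
  shows "Cauchy Y"
proof (rule metric_CauchyI)
  fix e :: real assume "0 < e"
  define h where "h y = bregman g g' y x0" for y
  have "bounded {y. h y \<le> m + 1}"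
    unfolding h_def by (rule totally_convex_bounded_bregman_sublevel[OF gF assms(2)])
  from H2_imp_bregman_ge[OF gF assms(3) this half_gt_zero[OF \<open>0 < e\<close>]]
  obtain \<delta> where "0 < \<delta>"
    and \<delta>: "\<And>w y. h w \<le> m + 1 \<Longrightarrow> e / 2 \<le> norm (y - w) \<Longrightarrow> \<delta> \<le> bregman g g' y w"
    by auto
  have "m < m + min 1 (\<delta> / 2)"
    using \<open>0 < \<delta>\<close> by simp
  then have "eventually (\<lambda>n. h (Y n) < m + min 1 (\<delta> / 2)) sequentially"
    using order_tendstoD(2)[OF lim] unfolding h_def by blast
  then obtain N where N: "\<And>n. n \<ge> N \<Longrightarrow> h (Y n) < m + min 1 (\<delta> / 2)"
    unfolding eventually_sequentially by blast
  have "dist (Y i) (Y j) < e" if "i \<ge> N" "j \<ge> N" for i j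
  proof (rule ccontr)
    assume "\<not> dist (Y i) (Y j) < e"
    then have far: "e \<le> norm (Y i - Y j)"
      by (simp add: dist_norm)
    \<comment> \<open>the midpoint w would then lie below the infimum m\<close>
    define w where "w = (1/2) *\<^sub>R (Y i + Y j)"
    have "w \<in> Q"
      using convexD[OF assms(4) Y Y, of "1/2" "1/2"] by (simp add: w_def scaleR_right_distrib)
    have split: "h (Y i) + h (Y j) = bregman g g' (Y i) w + bregman g g' (Y j) w + 2 * h w"
      unfolding h_def by (rule bregman_midpoint[OF w_def])
    have "h w \<le> m + 1"
      using split N[OF that(1)] N[OF that(2)] bregman_nonneg[OF gF, of "Y i" w]
        bregman_nonneg[OF gF, of "Y j" w] by linarith
    moreover have "2 *\<^sub>R (Y i - w) = Y i - Y j"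
      by (simp add: w_def scaleR_right_diff_distrib scaleR_2)
    then have "norm (Y i - Y j) = 2 * norm (Y i - w)"
      by (metis abs_numeral norm_scaleR)
    then have "e / 2 \<le> norm (Y i - w)"
      using far by simp
    ultimately have "\<delta> \<le> bregman g g' (Y i) w"
      by (rule \<delta>)
    then show False
      using split N[OF that(1)] N[OF that(2)] m_le[OF \<open>w \<in> Q\<close>] bregman_nonneg[OF gF, of "Y j" w]
      unfolding h_def by linarith
  qed
  then show "\<exists>N. \<forall>i\<ge>N. \<forall>j\<ge>N. dist (Y i) (Y j) < e"
    by blast
qed

lemma bregman_projection_exists:
  fixes g :: "'a::banach \<Rightarrow> real"
  assumes gF: "class_F g g'" and gtc: "totally_convex g g'" and "H2 g g'"
    and Q: "closed Q" "convex Q" "Q \<noteq> {}"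
  shows "\<exists>y\<in>Q. \<forall>z\<in>Q. bregman g g' y x0 \<le> bregman g g' z x0"
proof -
  define h where "h y = bregman g g' y x0" for y
  define m where "m = Inf (h ` Q)"
  have "bdd_below (h ` Q)"
    unfolding bdd_below_def h_def using bregman_nonneg[OF gF] by blast
  then have m_le: "m \<le> h z" if "z \<in> Q" for z
    unfolding m_def using that by (simp add: cInf_lower)
  have "\<exists>y\<in>Q. h y < m + 1 / Suc n" for n
  proof -
    have "Inf (h ` Q) < m + 1 / Suc n"
      unfolding m_def by simp
    then show ?thesis
      using cInf_lessD[of "h ` Q"] Q(3) by blast
  qed
  then obtain Y where Y: "\<And>n. Y n \<in> Q" and Y_le: "\<And>n. h (Y n) < m + 1 / Suc n"
    by metis
  have lim: "(\<lambda>n. h (Y n)) \<longlonglongrightarrow> m"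
  proof (rule real_tendsto_sandwich)
    show "\<forall>\<^sub>F n in sequentially. m \<le> h (Y n)"
      using m_le Y by simp
    show "\<forall>\<^sub>F n in sequentially. h (Y n) \<le> m + 1 / Suc n"
      using Y_le by (simp add: less_imp_le)
    show "(\<lambda>n. m + 1 / Suc n) \<longlonglongrightarrow> m"
      using tendsto_add[OF tendsto_const LIMSEQ_Suc[OF lim_inverse_n']] by simp
  qed simp
  have "Cauchy Y"
    using bregman_minimizing_Cauchy[OF gF gtc assms(3) Q(2), of Y x0 m] Y lim m_le
    unfolding h_def by blast
  then obtain y where Yy: "Y \<longlonglongrightarrow> y"
    using Cauchy_convergent_iff convergent_def by blast
  have "y \<in> Q"
    using closed_sequentially[OF Q(1) Y Yy] .
  have "(\<lambda>n. h (Y n) + g x0 + blinfun_apply (g' x0) (Y n - x0))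
      \<longlonglongrightarrow> m + g x0 + blinfun_apply (g' x0) (y - x0)"
    by (intro tendsto_intros lim Yy)
  then have "(\<lambda>n. g (Y n)) \<longlonglongrightarrow> m + g x0 + blinfun_apply (g' x0) (y - x0)"
    by (simp add: h_def bregman_def)
  then have "g y \<le> m + g x0 + blinfun_apply (g' x0) (y - x0)"
    using lsc_le_tendsto[OF class_FD(2)[OF gF] Yy] by simp
  then have "h y \<le> m"
    by (simp add: h_def bregman_def)
  then show ?thesis
    using \<open>y \<in> Q\<close> m_le unfolding h_def by (meson order_trans)
qed

lemma bregman_projection_unique:
  assumes gF: "class_F g g'" and "convex Q"
    and y1: "y1 \<in> Q" "\<forall>z\<in>Q. bregman g g' y1 x0 \<le> bregman g g' z x0"
    and y2: "y2 \<in> Q" "\<forall>z\<in>Q. bregman g g' y2 x0 \<le> bregman g g' z x0"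
  shows "y1 = y2"
proof (rule ccontr)
  assume "y1 \<noteq> y2"
  define w where "w = (1/2) *\<^sub>R y1 + (1/2) *\<^sub>R y2"
  have "w \<in> Q"
    unfolding w_def by (rule convexD[OF assms(2) y1(1) y2(1)]) auto
  then have "bregman g g' y1 x0 \<le> bregman g g' w x0"
    using y1(2) by blast
  moreover have "strictly_convex (\<lambda>z. bregman g g' z x0)"
    by (rule strictly_convex_bregman_left[OF class_FD(1)[OF gF]])
  then have "bregman g g' w x0 < (bregman g g' y1 x0 + bregman g g' y2 x0) / 2"
    unfolding w_def using \<open>y1 \<noteq> y2\<close> by (rule strictly_convex_midpoint)
  moreover have "bregman g g' y1 x0 = bregman g g' y2 x0"
    using y1 y2 by (intro order_antisym) auto
  ultimately show False
    by simp
qed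

lemma bproj_mem:
  fixes g :: "'a::banach \<Rightarrow> real"
  assumes "class_F g g'" "totally_convex g g'" "H2 g g'" "closed Q" "convex Q" "Q \<noteq> {}"
  shows "bproj g g' Q x \<in> Q"
proof -
  have "\<exists>!y. y \<in> Q \<and> (\<forall>z\<in>Q. bregman g g' y x \<le> bregman g g' z x)"
    using bregman_projection_exists[OF assms] bregman_projection_unique[OF assms(1,5)] by blast
  from theI'[OF this] show ?thesis
    unfolding bproj_def by blast
qed

lemma bproj_eq_self:
  assumes "class_F g g'" "x \<in> Q"
  shows "bproj g g' Q x = x"
  unfolding bproj_def
proof (rule the_equality)
  show "x \<in> Q \<and> (\<forall>z\<in>Q. bregman g g' x x \<le> bregman g g' z x)"
    using assms(2) bregman_nonneg[OF assms(1)] by simp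
  fix y assume "y \<in> Q \<and> (\<forall>z\<in>Q. bregman g g' y x \<le> bregman g g' z x)"
  then have "bregman g g' y x \<le> bregman g g' x x"
    using assms(2) by blast
  then have "bregman g g' y x \<le> 0"
    by simp
  then show "y = x"
    by (rule bregman_le_0_imp_eq[OF assms(1)])
qed

section \<open>Fixed points of quasi D_g-nonexpansive maps\<close>

lemma quasi_Dg_nonexpansive_bregman_le:
  assumes gF: "class_F g g'" and Tq: "quasi_Dg_nonexpansive g g' K T"
    and p: "p \<in> K" "p \<in> T p" and x: "x \<in> K"
  shows "bregman g g' x (bproj g g' (T x) x)
    \<le> blinfun_apply (g' x - g' (bproj g g' (T x) x)) (x - p)"
proof -
  define s where "s = bproj g g' (T x) x"
  have "p = bproj g g' (T p) p"
    using bproj_eq_self[OF gF p(2)] by simp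
  then have "bregman g g' p s \<le> bregman g g' p x"
    using Tq p(1) x unfolding quasi_Dg_nonexpansive_def Let_def s_def by blast
  moreover have "blinfun_apply (g' x - g' s) (p - x) = - blinfun_apply (g' x - g' s) (x - p)"
    by (metis blinfun.minus_right minus_diff_eq)
  ultimately show ?thesis
    using bregman_three_point[of g g' p s x] unfolding s_def by linarith
qed

lemma bproj_bregman_le_0_imp_mem:
  fixes g :: "'a::banach \<Rightarrow> real"
  assumes "class_F g g'" "totally_convex g g'" "H2 g g'" "closed Q" "convex Q" "Q \<noteq> {}"
    and "bregman g g' x (bproj g g' Q x) \<le> 0"
  shows "x \<in> Q"
  using bregman_le_0_imp_eq[OF assms(1,7)] bproj_mem[OF assms(1-6), of x] by metis

lemma closed_fixed_points:
  fixes g :: "'a::banach \<Rightarrow> real"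
  assumes gF: "class_F g g'" and gtc: "totally_convex g g'" and H2: "H2 g g'"
    and K: "closed K" and T: "\<forall>x\<in>K. T x \<noteq> {} \<and> closed (T x) \<and> convex (T x)"
    and Tq: "quasi_Dg_nonexpansive g g' K T"
  shows "closed {x \<in> K. x \<in> T x}"
  unfolding closed_sequential_limits
proof (intro allI impI, elim conjE)
  fix X x assume X: "\<forall>n. X n \<in> {x \<in> K. x \<in> T x}" and lim: "X \<longlonglongrightarrow> x"
  have "x \<in> K"
    using closed_sequentially[OF K _ lim] X by blast
  define \<psi> where "\<psi> = g' x - g' (bproj g g' (T x) x)"
  have "(\<lambda>n. blinfun_apply \<psi> (x - X n)) \<longlonglongrightarrow> blinfun_apply \<psi> (x - x)"
    by (intro tendsto_intros lim)
  moreover have "bregman g g' x (bproj g g' (T x) x) \<le> blinfun_apply \<psi> (x - X n)" for n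
    unfolding \<psi>_def using quasi_Dg_nonexpansive_bregman_le[OF gF Tq _ _ \<open>x \<in> K\<close>] X by blast
  ultimately have "bregman g g' x (bproj g g' (T x) x) \<le> 0"
    using LIMSEQ_le_const by force
  then show "x \<in> {x \<in> K. x \<in> T x}"
    using bproj_bregman_le_0_imp_mem[OF gF gtc H2] T \<open>x \<in> K\<close> by blast
qed

lemma convex_fixed_points:
  fixes g :: "'a::banach \<Rightarrow> real"
  assumes gF: "class_F g g'" and gtc: "totally_convex g g'" and H2: "H2 g g'"
    and K: "convex K" and T: "\<forall>x\<in>K. T x \<noteq> {} \<and> closed (T x) \<and> convex (T x)"
    and Tq: "quasi_Dg_nonexpansive g g' K T"
  shows "convex {x \<in> K. x \<in> T x}"
proof (rule convexI)
  fix x1 x2 and u v :: real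
  assume x1: "x1 \<in> {x \<in> K. x \<in> T x}" and x2: "x2 \<in> {x \<in> K. x \<in> T x}"
    and uv: "0 \<le> u" "0 \<le> v" "u + v = 1"
  define z where "z = u *\<^sub>R x1 + v *\<^sub>R x2"
  have "z \<in> K"
    using convexD[OF K _ _ uv] x1 x2 unfolding z_def by blast
  define \<psi> where "\<psi> = g' z - g' (bproj g g' (T z) z)"
  have le: "bregman g g' z (bproj g g' (T z) z) \<le> blinfun_apply \<psi> (z - x)"
    if "x \<in> {x \<in> K. x \<in> T x}" for x
    unfolding \<psi>_def using quasi_Dg_nonexpansive_bregman_le[OF gF Tq _ _ \<open>z \<in> K\<close>] that by blast
  have "u *\<^sub>R (z - x1) + v *\<^sub>R (z - x2) = (u + v) *\<^sub>R z - z"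
    unfolding z_def by (simp add: algebra_simps)
  then have "u *\<^sub>R (z - x1) + v *\<^sub>R (z - x2) = 0"
    using uv(3) by simp
  then have "u * blinfun_apply \<psi> (z - x1) + v * blinfun_apply \<psi> (z - x2) = 0"
    by (metis blinfun.add_right blinfun.scaleR_right blinfun.zero_right real_scaleR_def)
  then have "(u + v) * bregman g g' z (bproj g g' (T z) z) \<le> 0"
    using mult_left_mono[OF le[OF x1] uv(1)] mult_left_mono[OF le[OF x2] uv(2)]
    by (simp add: distrib_right)
  then have "bregman g g' z (bproj g g' (T z) z) \<le> 0"
    using uv(3) by simp
  then show "u *\<^sub>R x1 + v *\<^sub>R x2 \<in> {x \<in> K. x \<in> T x}"
    using bproj_bregman_le_0_imp_mem[OF gF gtc H2] T \<open>z \<in> K\<close> unfolding z_def by blast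
qed

theorem proposition2p17:
  fixes g :: "'a::banach \<Rightarrow> real" and g' :: "'a \<Rightarrow> ('a \<Rightarrow>\<^sub>L real)"
    and K :: "'a set" and C :: "'b::banach set"
    and f :: "'a \<Rightarrow> 'a \<Rightarrow> 'b" and T :: "'a \<Rightarrow> 'a set"
  assumes K: "K \<noteq> {}" "closed K" "convex K"
    and gF: "class_F g g'" and gtc: "totally_convex g g'" and "H1 g g'" and "H2 g g'"
    and C: "closed C" "convex C" "cone C" "pointed C" "interior C \<noteq> {}"
    and T: "\<forall>x\<in>K. T x \<subseteq> K \<and> T x \<noteq> {} \<and> closed (T x) \<and> convex (T x)"
    and Tq: "quasi_Dg_nonexpansive g g' K T"
    and fconv: "\<forall>x. C_convex C (f x)"
    and flsc: "\<forall>x. positively_lsc C (f x)"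
  shows "closed (DS C K f T) \<and> convex (DS C K f T)"
proof -
  have T': "\<forall>x\<in>K. T x \<noteq> {} \<and> closed (T x) \<and> convex (T x)"
    using T by blast
  have "C \<noteq> {}"
    using C(5) interior_subset by blast
  have "closed {x. f y x \<in> uminus ` C}" "convex {x. f y x \<in> uminus ` C}" for y
    using closed_neg_cone_preimage[OF C(1-3) \<open>C \<noteq> {}\<close>] flsc
      convex_neg_cone_preimage[OF C(2,3)] fconv by blast+
  moreover have "DS C K f T = {x \<in> K. x \<in> T x} \<inter> (\<Inter>y\<in>K. {x. f y x \<in> uminus ` C})"
    unfolding DS_def by auto
  ultimately show ?thesis
    using closed_fixed_points[OF gF gtc \<open>H2 g g'\<close> K(2) T' Tq]
      convex_fixed_points[OF gF gtc \<open>H2 g g'\<close> K(3) T' Tq]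
    by (simp add: closed_Int closed_INT convex_Int convex_INT)
qed

end
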